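(* Under the standing setup and the algorithm/assumptions described in the context, $\displaystyle\liminf_{n\to\infty}\mathcal{M}_{\bar\gamma}^{F_n,\phi}(x_n)=0$.
   Context: Standing setup: $\mathcal{X},\mathcal{Z}$ finite-dimensional real Hilbert spaces; $\phi:\mathcal{X}\to\mathbb{R}\cup\{+\infty\}$ proper lower semicontinuous convex; $h:\mathcal{X}\to\mathbb{R}$ differentiable with $\nabla h$ Lipschitz on $\mathrm{dom}\,\phi$; $\mathfrak{S}:\mathcal{X}\to\mathcal{Z}$ continuously differentiable; $g:\mathcal{Z}\to\mathbb{R}$ Lipschitz with constant $L_g>0$ and $\eta$-weakly convex ($g+\frac\eta2\|\cdot\|^2$ convex, $\eta>0$); $F:=h+g\circ\mathfrak{S}$ and $\mathrm{argmin}_x(F+\phi)\ne\emptyset$. Notation: $\mathrm{prox}_{\gamma\phi}(\bar x)=\mathrm{argmin}_x(\phi(x)+\frac1{2\gamma}\|x-\bar x\|^2)$; Moreau envelope ${}^{\mu}g(\bar z)=\min_z(g(z)+\frac1{2\mu}\|z-\bar z\|^2)$ for $\mu\in(0,\eta^{-1})$. $F_n:=h+{}^{\mu_n}g\circ\mathfrak{S}$, and $\mathcal{M}_\gamma^{F_n,\phi}(x)=\|(x-\mathrm{prox}_{\gamma\phi}(x-\gamma\nabla F_n(x)))/\gamma\|$. Algorithm and assumptions: fix $x_1\in\mathrm{dom}\,\phi$ and $c\in(0,1)$. (a) $(\mu_n)\subset(0,\frac{1}{2\eta}]$ with $\mu_n\to0$, $\sum_n\mu_n=+\infty$, and $M^{-1}\le\mu_{n+1}/\mu_n\le1$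 for some $M\ge1$. (b) Each $\nabla F_n$ is Lipschitz on $\mathrm{dom}\,\phi$ with constant $L_{\nabla F_n}=\varpi_1+\varpi_2\mu_n^{-1}$, $\varpi_1\ge0$, $\varpi_2>0$ fixed. (c) $\gamma_n>0$ satisfies $(F_n+\phi)(\mathrm{prox}_{\gamma_n\phi}(x_n-\gamma_n\nabla F_n(x_n)))\le(F_n+\phi)(x_n)-c\gamma_n(\mathcal{M}_{\gamma_n}^{F_n,\phi}(x_n))^2$ and $\beta L_{\nabla F_n}^{-1}\le\gamma_n\le\bar\gamma$ for fixed $\beta,\bar\gamma>0$. (d) $x_{n+1}=\mathrm{prox}_{\gamma_n\phi}(x_n-\gamma_n\nabla F_n(x_n))$. *)

theory Defs
  imports "HOL-Analysis.Analysis"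
begin

definition edom :: "('a \<Rightarrow> ereal) \<Rightarrow> 'a set" where
  "edom \<phi> = {x. \<phi> x < \<infinity>}"

definition proper_fun :: "('a \<Rightarrow> ereal) \<Rightarrow> bool" where
  "proper_fun \<phi> \<longleftrightarrow> (\<forall>x. \<phi> x \<noteq> -\<infinity>) \<and> (\<exists>x. \<phi> x < \<infinity>)"

definition epi :: "('a \<Rightarrow> ereal) \<Rightarrow> ('a \<times> real) set" where
  "epi \<phi> = {(x, t). \<phi> x \<le> ereal t}"

definition convex_fun :: "('a::real_vector \<Rightarrow> ereal) \<Rightarrow> bool" where
  "convex_fun \<phi> \<longleftrightarrow> convex (epi \<phi>)"

definition lsc_fun :: "('a::topological_space \<Rightarrow> ereal) \<Rightarrow> bool" where
  "lsc_fun \<phi> \<longleftrightarrow> closed (epi \<phi>)"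

definition grad :: "('a::real_inner \<Rightarrow> real) \<Rightarrow> 'a \<Rightarrow> 'a" where
  "grad f x = (SOME v. (f has_derivative (\<lambda>d. v \<bullet> d)) (at x))"

definition prox :: "real \<Rightarrow> ('a::real_normed_vector \<Rightarrow> ereal) \<Rightarrow> 'a \<Rightarrow> 'a" where
  "prox \<gamma> \<phi> xb = (THE p. \<forall>y. \<phi> p + ereal (1 / (2 * \<gamma>) * (norm (p - xb))\<^sup>2)
                               \<le> \<phi> y + ereal (1 / (2 * \<gamma>) * (norm (y - xb))\<^sup>2))"

definition moreau :: "real \<Rightarrow> ('b::real_normed_vector \<Rightarrow> real) \<Rightarrow> 'b \<Rightarrow> real" where
  "moreau \<mu> g zb = (INF z. g z + 1 / (2 * \<mu>) * (norm (z - zb))\<^sup>2)"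

definition resid :: "real \<Rightarrow> ('a::real_inner \<Rightarrow> real) \<Rightarrow> ('a \<Rightarrow> ereal) \<Rightarrow> 'a \<Rightarrow> real" where
  "resid \<gamma> F \<phi> x = norm ((1 / \<gamma>) *\<^sub>R (x - prox \<gamma> \<phi> (x - \<gamma> *\<^sub>R grad F x)))"

end

theory Submission
  imports Defs
begin

text \<open>The quantity \<open>\<Psi> n = F n (x n) + \<phi> (x n) + \<mu> n * Lg\<^sup>2 / 2\<close> is a Lyapunov function.
  The Moreau envelope satisfies \<open>g - \<mu> Lg\<^sup>2 / 2 \<le> moreau \<mu> g\<close> and
  \<open>moreau \<mu>' g \<le> moreau \<mu> g + (\<mu> - \<mu>') * Lg\<^sup>2 / 2\<close> for \<open>\<mu>' \<le> \<mu>\<close>, so for nonincreasing \<open>\<mu>\<close>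
  the descent condition makes \<open>\<Psi>\<close> drop by at least \<open>c * \<gamma> n * (resid (\<gamma> n))\<^sup>2\<close> per step, while
  \<open>\<Psi>\<close> stays above \<open>min (h + g \<circ> S + \<phi>)\<close>; hence \<open>\<Sum> \<gamma> n * (resid (\<gamma> n))\<^sup>2 < \<infinity>\<close>.
  Since \<open>\<gamma> n \<ge> \<kappa> * \<mu> n\<close> and the residual is nonincreasing in the step size (monotonicity of
  \<open>\<partial>\<phi>\<close>, read off the variational inequality of the prox), \<open>\<Sum> \<mu> n * (resid \<gamma>bar)\<^sup>2 < \<infinity>\<close>,
  and \<open>\<Sum> \<mu> n = \<infinity>\<close> forces the residuals at \<open>\<gamma>bar\<close> to come arbitrarily close to zero.\<close>

lemma convex_funD:
  fixes \<phi> :: "'a::real_vector \<Rightarrow> ereal"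
  assumes "convex_fun \<phi>" "\<phi> x \<le> ereal a" "\<phi> y \<le> ereal b" "0 \<le> t" "t \<le> 1"
  shows "\<phi> ((1 - t) *\<^sub>R x + t *\<^sub>R y) \<le> ereal ((1 - t) * a + t * b)"
proof -
  have "(x, a) \<in> epi \<phi>" "(y, b) \<in> epi \<phi>"
    using assms by (auto simp: epi_def)
  then have "(1 - t) *\<^sub>R (x, a) + t *\<^sub>R (y, b) \<in> epi \<phi>"
    using assms(1,4,5) unfolding convex_fun_def by (intro convexD) auto
  then show ?thesis by (simp add: epi_def)
qed

lemma lsc_fun_closed_sublevel:
  fixes f :: "'a::topological_space \<Rightarrow> ereal"
  assumes "lsc_fun f"
  shows "closed {y. f y \<le> ereal t}"
proof -
  have "{y. f y \<le> ereal t} = (\<lambda>y. (y, t)) -` epi f"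
    by (auto simp: epi_def)
  then show ?thesis
    using assms unfolding lsc_fun_def by (simp add: closed_vimage continuous_on_Pair)
qed

lemma lsc_fun_add_continuous:
  fixes \<phi> :: "'a::topological_space \<Rightarrow> ereal"
  assumes "lsc_fun \<phi>" "continuous_on UNIV q"
  shows "lsc_fun (\<lambda>y. \<phi> y + ereal (q y))"
proof -
  have "\<phi> y + ereal (q y) \<le> ereal t \<longleftrightarrow> \<phi> y \<le> ereal (t - q y)" for y t
    by (cases "\<phi> y") auto
  then have "epi (\<lambda>y. \<phi> y + ereal (q y)) = (\<lambda>z. (fst z, snd z - q (fst z))) -` epi \<phi>"
    by (auto simp: epi_def)
  moreover have "continuous_on UNIV (\<lambda>z. (fst z, snd z - q (fst z)))"
    by (intro continuous_intros continuous_on_compose2[OF assms(2)]) auto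
  ultimately show ?thesis
    using assms(1) unfolding lsc_fun_def by (simp add: closed_vimage)
qed

lemma lsc_fun_tendsto_le:
  fixes f :: "'a::topological_space \<Rightarrow> ereal"
  assumes "lsc_fun f" "y \<longlonglongrightarrow> l" "(\<lambda>k. f (y k)) \<longlonglongrightarrow> v"
  shows "f l \<le> v"
proof (rule dense_ge)
  fix w assume "v < w"
  show "f l \<le> w"
  proof (cases w)
    case (real t)
    have "eventually (\<lambda>k. y k \<in> {y. f y \<le> ereal t}) sequentially"
      using order_tendstoD(2)[OF assms(3) \<open>v < w\<close>] real by (auto elim: eventually_mono)
    then have "l \<in> {y. f y \<le> ereal t}"
      using lsc_fun_closed_sublevel[OF assms(1)] assms(2) by (intro Lim_in_closed_set) auto
    then show ?thesis using real by simp
  qed (use \<open>v < w\<close> in auto)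
qed

lemma lsc_fun_attains_min_on_compact:
  fixes f :: "'a::metric_space \<Rightarrow> ereal"
  assumes "lsc_fun f" "compact K" "K \<noteq> {}"
  obtains p where "p \<in> K" "\<And>y. y \<in> K \<Longrightarrow> f p \<le> f y"
proof -
  obtain u where u: "\<And>n. u n \<in> f ` K" "u \<longlonglongrightarrow> Inf (f ` K)"
    using Inf_as_limit[of "f ` K"] assms(3) by auto
  have "\<forall>n. \<exists>z. z \<in> K \<and> f z = u n"
    using u(1) by (metis imageE)
  then obtain y where y: "\<And>n. y n \<in> K" "\<And>n. f (y n) = u n"
    by metis
  obtain l r where l: "l \<in> K" and r: "strict_mono r" and lim: "(y \<circ> r) \<longlonglongrightarrow> l"
    using seq_compactE[OF compact_imp_seq_compact[OF assms(2)]] y(1) by metis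
  have "(\<lambda>k. f ((y \<circ> r) k)) \<longlonglongrightarrow> Inf (f ` K)"
    using LIMSEQ_subseq_LIMSEQ[OF u(2) r] y(2) by (simp add: o_def)
  then have "f l \<le> Inf (f ` K)"
    by (rule lsc_fun_tendsto_le[OF assms(1) lim])
  then have "f l \<le> f y" if "y \<in> K" for y
    using INF_lower[OF that] by (rule order.trans)
  then show thesis
    using that l by blast
qed

lemma proper_lsc_fun_bdd_below_on_compact:
  fixes f :: "'a::metric_space \<Rightarrow> ereal"
  assumes "proper_fun f" "lsc_fun f" "compact K"
  obtains m where "\<And>y. y \<in> K \<Longrightarrow> ereal m \<le> f y"
proof (cases "K = {}")
  case False
  then obtain p where p: "p \<in> K" "\<And>y. y \<in> K \<Longrightarrow> f p \<le> f y"
    using lsc_fun_attains_min_on_compact[OF assms(2,3)] by blast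
  have "ereal (real_of_ereal (f p)) \<le> f p"
    using assms(1) by (cases "f p") (auto simp: proper_fun_def)
  then show thesis
    using that p by (meson order_trans)
qed simp

lemma proper_fun_edomE:
  assumes "proper_fun \<phi>" "x \<in> edom \<phi>"
  obtains a where "\<phi> x = ereal a"
  using assms by (cases "\<phi> x") (auto simp: proper_fun_def edom_def)

lemma proper_convex_lsc_fun_norm_minorant:
  fixes f :: "'a::{real_normed_vector, heine_borel} \<Rightarrow> ereal"
  assumes "proper_fun f" "lsc_fun f" "convex_fun f" "f x0 = ereal f0"
  obtains m C where "0 \<le> C" "\<And>y. ereal (m - C * norm (y - x0)) \<le> f y"
proof -
  \<comment> \<open>Convexity along segments from \<open>x0\<close> propagates the lower bound on the unit ball
    outwards, with a linear loss.\<close>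
  obtain m where m: "\<And>y. y \<in> cball x0 1 \<Longrightarrow> ereal m \<le> f y"
    using proper_lsc_fun_bdd_below_on_compact[OF assms(1,2) compact_cball] by blast
  define C where "C = f0 - m"
  have "m \<le> f0" using m[of x0] assms(4) by simp
  then have "0 \<le> C" by (simp add: C_def)
  have "ereal (m - C * norm (y - x0)) \<le> f y" for y
  proof (cases "norm (y - x0) \<le> 1")
    case True
    then have "ereal m \<le> f y" using m by (simp add: dist_norm norm_minus_commute)
    moreover have "m - C * norm (y - x0) \<le> m" using \<open>0 \<le> C\<close> by simp
    ultimately show ?thesis by (metis ereal_less_eq(3) order.trans)
  next
    case False
    define D where "D = norm (y - x0)"
    have "1 < D" using False by (simp add: D_def)
    show ?thesis
    proof (cases "f y")
      case (real b)
      define z where "z = (1 - 1 / D) *\<^sub>R x0 + (1 / D) *\<^sub>R y"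
      have "z - x0 = (1 / D) *\<^sub>R (y - x0)" by (simp add: z_def algebra_simps)
      then have "norm (z - x0) = 1" using \<open>1 < D\<close> by (simp add: D_def [symmetric])
      then have "ereal m \<le> f z" using m by (simp add: dist_norm norm_minus_commute)
      also have "f z \<le> ereal ((1 - 1 / D) * f0 + (1 / D) * b)"
        unfolding z_def by (rule convex_funD[OF assms(3)]) (use assms(4) real \<open>1 < D\<close> in auto)
      finally have "D * m \<le> D * ((1 - 1 / D) * f0 + (1 / D) * b)"
        using \<open>1 < D\<close> by simp
      also have "\<dots> = D * f0 - f0 + b" using \<open>1 < D\<close> by (simp add: field_simps)
      finally have "m - C * D \<le> b" using \<open>m \<le> f0\<close> by (simp add: C_def algebra_simps)
      then show ?thesis using real by (simp add: D_def)
    next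
      case MInf
      then show ?thesis using assms(1) by (simp add: proper_fun_def)
    qed simp
  qed
  then show thesis using that \<open>0 \<le> C\<close> by blast
qed

lemma young_ineq_sq:
  fixes a b \<gamma> :: real
  assumes "0 < \<gamma>"
  shows "a * b \<le> 1 / (2 * \<gamma>) * b\<^sup>2 + \<gamma> * a\<^sup>2 / 2"
proof -
  have "0 \<le> (b - \<gamma> * a)\<^sup>2 / (2 * \<gamma>)" using assms by simp
  also have "\<dots> = 1 / (2 * \<gamma>) * b\<^sup>2 + \<gamma> * a\<^sup>2 / 2 - a * b"
    using assms by (simp add: field_simps power2_eq_square)
  finally show ?thesis by simp
qed

definition prox_objective :: "real \<Rightarrow> ('a::real_normed_vector \<Rightarrow> ereal) \<Rightarrow> 'a \<Rightarrow> 'a \<Rightarrow> ereal"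
  where "prox_objective \<gamma> \<phi> u y = \<phi> y + ereal (1 / (2 * \<gamma>) * (norm (y - u))\<^sup>2)"

lemma prox_eq_THE_min:
  "prox \<gamma> \<phi> u = (THE p. \<forall>y. prox_objective \<gamma> \<phi> u p \<le> prox_objective \<gamma> \<phi> u y)"
  by (simp add: prox_def prox_objective_def)

lemma lsc_fun_prox_objective:
  fixes \<phi> :: "'a::real_normed_vector \<Rightarrow> ereal"
  assumes "lsc_fun \<phi>"
  shows "lsc_fun (prox_objective \<gamma> \<phi> u)"
  unfolding prox_objective_def
  by (intro lsc_fun_add_continuous assms continuous_intros)

lemma prox_objective_bounded_sublevel:
  fixes \<phi> :: "'a::{real_inner, heine_borel} \<Rightarrow> ereal"
  assumes "proper_fun \<phi>" "lsc_fun \<phi>" "convex_fun \<phi>" "0 < \<gamma>"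
  shows "bounded {y. prox_objective \<gamma> \<phi> u y \<le> ereal a}"
proof -
  obtain x0 where "x0 \<in> edom \<phi>" using assms(1) by (auto simp: proper_fun_def edom_def)
  then obtain f0 where "\<phi> x0 = ereal f0" using assms(1) by (blast elim: proper_fun_edomE)
  then obtain m C where "0 \<le> C" and mC: "\<And>y. ereal (m - C * norm (y - x0)) \<le> \<phi> y"
    using proper_convex_lsc_fun_norm_minorant[OF assms(1-3)] by blast
  define e where "e = norm (x0 - u)"
  define B where "B = 4 * \<gamma> * (a - m + C * e + \<gamma> * C\<^sup>2)"
  have "norm (y - u) \<le> sqrt B" if y: "prox_objective \<gamma> \<phi> u y \<le> ereal a" for y
  proof -
    define n where "n = norm (y - u)"
    have "ereal (m - C * norm (y - x0)) + ereal (1 / (2 * \<gamma>) * n\<^sup>2) \<le> ereal a"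
      using add_right_mono[OF mC] y unfolding prox_objective_def n_def by (metis order.trans)
    then have "m - C * norm (y - x0) + 1 / (2 * \<gamma>) * n\<^sup>2 \<le> a" by simp
    moreover have "C * norm (y - x0) \<le> C * (n + e)"
      using norm_triangle_ineq[of "y - u" "u - x0"] \<open>0 \<le> C\<close>
      unfolding n_def e_def by (intro mult_left_mono) (simp_all add: norm_minus_commute)
    moreover have "C * n \<le> 1 / (2 * \<gamma>) * n\<^sup>2 / 2 + \<gamma> * C\<^sup>2"
      using young_ineq_sq[of "2 * \<gamma>" C n] assms(4) by simp
    ultimately have "1 / (2 * \<gamma>) * n\<^sup>2 / 2 \<le> a - m + C * e + \<gamma> * C\<^sup>2"
      by (simp add: distrib_left)
    then show ?thesis
      unfolding n_def B_def using assms(4) by (intro real_le_rsqrt) (simp add: field_simps)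
  qed
  then show ?thesis
    by (intro bounded_subset[OF bounded_cball[of u "sqrt B"]])
      (auto simp: dist_norm norm_minus_commute)
qed

lemma prox_objective_has_min:
  fixes \<phi> :: "'a::{real_inner, heine_borel} \<Rightarrow> ereal"
  assumes "proper_fun \<phi>" "lsc_fun \<phi>" "convex_fun \<phi>" "0 < \<gamma>"
  obtains p where "\<And>y. prox_objective \<gamma> \<phi> u p \<le> prox_objective \<gamma> \<phi> u y"
proof -
  obtain x0 where "x0 \<in> edom \<phi>" using assms(1) by (auto simp: proper_fun_def edom_def)
  then obtain f0 where "\<phi> x0 = ereal f0" using assms(1) by (blast elim: proper_fun_edomE)
  define a where "a = f0 + 1 / (2 * \<gamma>) * (norm (x0 - u))\<^sup>2"
  define K where "K = {y. prox_objective \<gamma> \<phi> u y \<le> ereal a}"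
  have "x0 \<in> K" by (simp add: K_def a_def prox_objective_def \<open>\<phi> x0 = ereal f0\<close>)
  moreover have "compact K"
    unfolding K_def compact_eq_bounded_closed
    using prox_objective_bounded_sublevel[OF assms]
      lsc_fun_closed_sublevel[OF lsc_fun_prox_objective[OF assms(2)]] by blast
  ultimately obtain p where "p \<in> K"
    and p: "\<And>y. y \<in> K \<Longrightarrow> prox_objective \<gamma> \<phi> u p \<le> prox_objective \<gamma> \<phi> u y"
    using lsc_fun_attains_min_on_compact[OF lsc_fun_prox_objective[OF assms(2)]] by blast
  have "prox_objective \<gamma> \<phi> u p \<le> prox_objective \<gamma> \<phi> u y" for y
  proof (cases "y \<in> K")
    case False
    with \<open>p \<in> K\<close> show ?thesis by (auto simp: K_def)
  qed (rule p)
  then show thesis by (rule that)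
qed

lemma prox_objective_min_in_edom:
  assumes "proper_fun \<phi>" "\<And>y. prox_objective \<gamma> \<phi> u p \<le> prox_objective \<gamma> \<phi> u y"
  shows "p \<in> edom \<phi>"
proof -
  obtain x0 where "\<phi> x0 < \<infinity>" using assms(1) by (auto simp: proper_fun_def)
  then have "prox_objective \<gamma> \<phi> u x0 < \<infinity>" by (simp add: prox_objective_def)
  then have "prox_objective \<gamma> \<phi> u p < \<infinity>" by (rule le_less_trans[OF assms(2)])
  then show ?thesis by (auto simp: prox_objective_def edom_def)
qed

lemma prox_objective_min_variational:
  fixes \<phi> :: "'a::real_inner \<Rightarrow> ereal"
  assumes "convex_fun \<phi>" "0 < \<gamma>"
    and min: "\<And>y. prox_objective \<gamma> \<phi> u p \<le> prox_objective \<gamma> \<phi> u y"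
    and "\<phi> p = ereal a" "\<phi> y = ereal b"
  shows "a + (u - p) \<bullet> (y - p) / \<gamma> \<le> b"
proof -
  define \<delta> where "\<delta> = a - b + (u - p) \<bullet> (y - p) / \<gamma>"
  define N where "N = (norm (y - p))\<^sup>2"
  have "\<delta> \<le> t * N / (2 * \<gamma>)" if t: "0 < t" "t < 1" for t
  proof -
    define z where "z = (1 - t) *\<^sub>R p + t *\<^sub>R y"
    define q where "q = 1 / (2 * \<gamma>) * (norm (z - u))\<^sup>2"
    have zu: "z - u = (p - u) + t *\<^sub>R (y - p)" by (simp add: z_def algebra_simps)
    have "(norm (z - u))\<^sup>2 = (norm (p - u))\<^sup>2 - 2 * t * ((u - p) \<bullet> (y - p)) + t\<^sup>2 * N"
      unfolding zu N_def power2_norm_eq_inner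
      by (simp add: inner_add_left inner_add_right inner_diff_left inner_diff_right inner_commute
          algebra_simps power2_eq_square)
    then have q: "q = 1 / (2 * \<gamma>) * (norm (p - u))\<^sup>2 - t * ((u - p) \<bullet> (y - p) / \<gamma>)
        + t * (t * N / (2 * \<gamma>))"
      unfolding q_def using assms(2) by (simp add: field_simps power2_eq_square)
    have "\<phi> z \<le> ereal ((1 - t) * a + t * b)"
      unfolding z_def by (rule convex_funD[OF assms(1)]) (use assms(4,5) t in auto)
    then have "prox_objective \<gamma> \<phi> u z \<le> ereal ((1 - t) * a + t * b + q)"
      unfolding prox_objective_def q_def by (metis add_right_mono plus_ereal.simps(1))
    with min[of z] have "prox_objective \<gamma> \<phi> u p \<le> ereal ((1 - t) * a + t * b + q)"
      by (rule order.trans)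
    then have "a + 1 / (2 * \<gamma>) * (norm (p - u))\<^sup>2 \<le> (1 - t) * a + t * b + q"
      using assms(4) by (simp add: prox_objective_def)
    then have "t * \<delta> \<le> t * (t * N / (2 * \<gamma>))"
      unfolding q by (simp add: \<delta>_def algebra_simps)
    then show ?thesis using t(1) by (rule mult_left_le_imp_le)
  qed
  then have "eventually (\<lambda>t. \<delta> \<le> t * N / (2 * \<gamma>)) (at_right 0)"
    using eventually_at_right_real[of 0 1] by (auto elim: eventually_mono)
  moreover have "((\<lambda>t. t * N / (2 * \<gamma>)) \<longlongrightarrow> 0) (at_right 0)"
    using assms(2) by (intro tendsto_eq_intros) auto
  ultimately have "\<delta> \<le> 0"
    by (intro tendsto_lowerbound) auto
  then show ?thesis by (simp add: \<delta>_def)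
qed

lemma prox_objective_min_unique:
  fixes \<phi> :: "'a::real_inner \<Rightarrow> ereal"
  assumes "proper_fun \<phi>" "convex_fun \<phi>" "0 < \<gamma>"
    and "\<And>y. prox_objective \<gamma> \<phi> u p \<le> prox_objective \<gamma> \<phi> u y"
    and "\<And>y. prox_objective \<gamma> \<phi> u q \<le> prox_objective \<gamma> \<phi> u y"
  shows "p = q"
proof -
  obtain a b where a: "\<phi> p = ereal a" and b: "\<phi> q = ereal b"
    using prox_objective_min_in_edom[OF assms(1,4)] prox_objective_min_in_edom[OF assms(1,5)]
    by (meson assms(1) proper_fun_edomE)
  have "a + (u - p) \<bullet> (q - p) / \<gamma> \<le> b" "b + (u - q) \<bullet> (p - q) / \<gamma> \<le> a"
    using prox_objective_min_variational[OF assms(2,3)] assms(4,5) a b by blast+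
  then have "((u - p) \<bullet> (q - p) + (u - q) \<bullet> (p - q)) / \<gamma> \<le> 0"
    unfolding add_divide_distrib by linarith
  moreover have "(u - p) \<bullet> (q - p) + (u - q) \<bullet> (p - q) = (q - p) \<bullet> (q - p)"
    by (simp add: inner_diff_left inner_diff_right inner_commute)
  ultimately have "(q - p) \<bullet> (q - p) \<le> 0"
    using assms(3) by (simp add: divide_le_0_iff)
  then show ?thesis
    by (metis inner_gt_zero_iff not_le right_minus_eq)
qed

lemma prox_minimizes:
  fixes \<phi> :: "'a::{real_inner, heine_borel} \<Rightarrow> ereal"
  assumes "proper_fun \<phi>" "lsc_fun \<phi>" "convex_fun \<phi>" "0 < \<gamma>"
  shows "prox_objective \<gamma> \<phi> u (prox \<gamma> \<phi> u) \<le> prox_objective \<gamma> \<phi> u y"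
proof -
  have "\<exists>!p. \<forall>y. prox_objective \<gamma> \<phi> u p \<le> prox_objective \<gamma> \<phi> u y"
    using prox_objective_has_min[OF assms] prox_objective_min_unique[OF assms(1,3,4)] by metis
  then show ?thesis
    unfolding prox_eq_THE_min by (rule theI'[THEN spec])
qed

lemma prox_in_edom:
  fixes \<phi> :: "'a::{real_inner, heine_borel} \<Rightarrow> ereal"
  assumes "proper_fun \<phi>" "lsc_fun \<phi>" "convex_fun \<phi>" "0 < \<gamma>"
  shows "prox \<gamma> \<phi> u \<in> edom \<phi>"
  using prox_objective_min_in_edom[OF assms(1) prox_minimizes[OF assms]] .

lemma weighted_sq_le_imp_le:
  fixes \<gamma>1 \<gamma>2 s r :: real
  assumes "0 < \<gamma>1" "\<gamma>1 \<le> \<gamma>2" "0 \<le> s" "\<gamma>1 * s\<^sup>2 + \<gamma>2 * r\<^sup>2 \<le> (\<gamma>1 + \<gamma>2) * (s * r)"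
  shows "r \<le> s"
proof (rule ccontr)
  assume "\<not> r \<le> s"
  then have "0 < r - s" by simp
  moreover have "\<gamma>1 * s < \<gamma>1 * r" using \<open>0 < r - s\<close> assms(1) by simp
  moreover have "\<gamma>1 * r \<le> \<gamma>2 * r" using \<open>0 < r - s\<close> assms(2,3) by (intro mult_right_mono) auto
  ultimately have "0 < (r - s) * (\<gamma>2 * r - \<gamma>1 * s)" by simp
  also have "\<dots> = \<gamma>1 * s\<^sup>2 + \<gamma>2 * r\<^sup>2 - (\<gamma>1 + \<gamma>2) * (s * r)"
    by (simp add: algebra_simps power2_eq_square)
  finally show False using assms(4) by simp
qed

lemma prox_subgradient_monotone:
  fixes \<phi> :: "'a::{real_inner, heine_borel} \<Rightarrow> ereal"
  assumes \<phi>: "proper_fun \<phi>" "lsc_fun \<phi>" "convex_fun \<phi>" and "0 < \<gamma>1" "0 < \<gamma>2"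
  shows "0 \<le> ((1 / \<gamma>1) *\<^sub>R (u1 - prox \<gamma>1 \<phi> u1) - (1 / \<gamma>2) *\<^sub>R (u2 - prox \<gamma>2 \<phi> u2))
                \<bullet> (prox \<gamma>1 \<phi> u1 - prox \<gamma>2 \<phi> u2)"
proof -
  define p1 where "p1 = prox \<gamma>1 \<phi> u1"
  define p2 where "p2 = prox \<gamma>2 \<phi> u2"
  obtain a1 a2 where a1: "\<phi> p1 = ereal a1" and a2: "\<phi> p2 = ereal a2"
    using prox_in_edom[OF \<phi> assms(4)] prox_in_edom[OF \<phi> assms(5)] unfolding p1_def p2_def
    by (meson \<phi>(1) proper_fun_edomE)
  have "a1 + (u1 - p1) \<bullet> (p2 - p1) / \<gamma>1 \<le> a2"
    using prox_objective_min_variational[OF \<phi>(3) assms(4) prox_minimizes[OF \<phi> assms(4)]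
        a1[unfolded p1_def] a2]
    unfolding p1_def .
  moreover have "a2 + (u2 - p2) \<bullet> (p1 - p2) / \<gamma>2 \<le> a1"
    using prox_objective_min_variational[OF \<phi>(3) assms(5) prox_minimizes[OF \<phi> assms(5)]
        a2[unfolded p2_def] a1]
    unfolding p2_def .
  moreover have "(u1 - p1) \<bullet> (p2 - p1) = - ((u1 - p1) \<bullet> (p1 - p2))"
    by (simp add: inner_diff_right)
  ultimately have "0 \<le> (u1 - p1) \<bullet> (p1 - p2) / \<gamma>1 - (u2 - p2) \<bullet> (p1 - p2) / \<gamma>2"
    by simp
  then show ?thesis
    unfolding p1_def [symmetric] p2_def [symmetric] by (simp add: inner_diff_left)
qed

lemma resid_antimono:
  fixes \<phi> :: "'a::{real_inner, heine_borel} \<Rightarrow> ereal"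
  assumes \<phi>: "proper_fun \<phi>" "lsc_fun \<phi>" "convex_fun \<phi>" and "0 < \<gamma>1" "\<gamma>1 \<le> \<gamma>2"
  shows "resid \<gamma>2 F \<phi> x \<le> resid \<gamma>1 F \<phi> x"
proof -
  have "0 < \<gamma>2" using assms(4,5) by simp
  define d where "d = grad F x"
  define U where "U = (1 / \<gamma>1) *\<^sub>R (x - prox \<gamma>1 \<phi> (x - \<gamma>1 *\<^sub>R d))"
  define V where "V = (1 / \<gamma>2) *\<^sub>R (x - prox \<gamma>2 \<phi> (x - \<gamma>2 *\<^sub>R d))"
  have p1: "prox \<gamma>1 \<phi> (x - \<gamma>1 *\<^sub>R d) = x - \<gamma>1 *\<^sub>R U"
    and p2: "prox \<gamma>2 \<phi> (x - \<gamma>2 *\<^sub>R d) = x - \<gamma>2 *\<^sub>R V"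
    using assms(4) \<open>0 < \<gamma>2\<close> by (simp_all add: U_def V_def)
  have "0 \<le> (U - V) \<bullet> (\<gamma>2 *\<^sub>R V - \<gamma>1 *\<^sub>R U)"
    using prox_subgradient_monotone[OF \<phi> assms(4) \<open>0 < \<gamma>2\<close>, of "x - \<gamma>1 *\<^sub>R d" "x - \<gamma>2 *\<^sub>R d"]
      assms(4) \<open>0 < \<gamma>2\<close>
    unfolding p1 p2 by (simp add: algebra_simps)
  then have "\<gamma>1 * (norm U)\<^sup>2 + \<gamma>2 * (norm V)\<^sup>2 \<le> (\<gamma>1 + \<gamma>2) * (U \<bullet> V)"
    unfolding power2_norm_eq_inner
    by (simp add: inner_diff_left inner_diff_right inner_commute algebra_simps)
  also have "\<dots> \<le> (\<gamma>1 + \<gamma>2) * (norm U * norm V)"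
    using assms(4,5) norm_cauchy_schwarz[of U V] by (intro mult_left_mono) auto
  finally have "norm V \<le> norm U"
    by (rule weighted_sq_le_imp_le[OF assms(4,5) norm_ge_zero])
  then show ?thesis
    unfolding resid_def U_def V_def d_def .
qed

lemma lipschitz_moreau_objective_ge:
  fixes g :: "'b::real_normed_vector \<Rightarrow> real"
  assumes "0 < \<mu>" "L-lipschitz_on UNIV g"
  shows "g zb - \<mu> * L\<^sup>2 / 2 \<le> g z + 1 / (2 * \<mu>) * (norm (z - zb))\<^sup>2"
proof -
  have "dist (g z) (g zb) \<le> L * dist z zb"
    using lipschitz_onD[OF assms(2)] by simp
  then have "g zb - L * norm (z - zb) \<le> g z"
    by (simp add: dist_real_def dist_norm abs_le_iff)
  moreover have "L * norm (z - zb) \<le> 1 / (2 * \<mu>) * (norm (z - zb))\<^sup>2 + \<mu> * L\<^sup>2 / 2"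
    by (rule young_ineq_sq[OF assms(1)])
  ultimately show ?thesis by linarith
qed

lemma moreau_ge:
  fixes g :: "'b::real_normed_vector \<Rightarrow> real"
  assumes "0 < \<mu>" "L-lipschitz_on UNIV g"
  shows "g zb - \<mu> * L\<^sup>2 / 2 \<le> moreau \<mu> g zb"
  unfolding moreau_def using lipschitz_moreau_objective_ge[OF assms] by (intro cINF_greatest) auto

lemma moreau_le_moreau_plus:
  fixes g :: "'b::real_normed_vector \<Rightarrow> real"
  assumes "0 < \<mu>'" "\<mu>' \<le> \<mu>" "L-lipschitz_on UNIV g"
  shows "moreau \<mu>' g zb \<le> moreau \<mu> g zb + (\<mu> - \<mu>') * L\<^sup>2 / 2"
proof -
  have "0 < \<mu>" using assms(1,2) by simp
  define k where "k = \<mu>' / \<mu>"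
  have k: "0 < k" "k \<le> 1" using assms(1,2) by (auto simp: k_def)
  have "moreau \<mu>' g zb \<le> g w + 1 / (2 * \<mu>) * (norm (w - zb))\<^sup>2 + (\<mu> - \<mu>') * L\<^sup>2 / 2" for w
  proof -
    define t where "t = norm (w - zb)"
    define Z where "Z = 1 / (2 * \<mu>) * t\<^sup>2"
    define w' where "w' = zb + k *\<^sub>R (w - zb)"
    have "moreau \<mu>' g zb \<le> g w' + 1 / (2 * \<mu>') * (norm (w' - zb))\<^sup>2"
      unfolding moreau_def
      by (rule cINF_lower[OF bdd_belowI2])
        (use lipschitz_moreau_objective_ge[OF assms(1,3)] in auto)
    also have "norm (w' - zb) = k * t" using k by (simp add: w'_def t_def)
    also have "1 / (2 * \<mu>') * (k * t)\<^sup>2 = k * Z"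
      using assms(1) \<open>0 < \<mu>\<close> by (simp add: Z_def k_def field_simps power2_eq_square)
    also have "g w' \<le> g w + L * ((1 - k) * t)"
    proof -
      have "w' - w = (k - 1) *\<^sub>R (w - zb)" by (simp add: w'_def algebra_simps)
      then have "dist w' w = (1 - k) * t" using k by (simp add: dist_norm t_def abs_if)
      then show ?thesis
        using lipschitz_onD[OF assms(3), of w' w] by (simp add: dist_real_def abs_le_iff)
    qed
    also have "L * ((1 - k) * t) \<le> (1 - k) * (Z + \<mu> * L\<^sup>2 / 2)"
      using mult_left_mono[OF young_ineq_sq[OF \<open>0 < \<mu>\<close>, of L t], of "1 - k"] k
      by (simp add: Z_def mult.left_commute)
    finally have "moreau \<mu>' g zb \<le> g w + Z + (1 - k) * \<mu> * L\<^sup>2 / 2"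
      by (simp add: algebra_simps)
    moreover have "(1 - k) * \<mu> = \<mu> - \<mu>'" using \<open>0 < \<mu>\<close> by (simp add: k_def field_simps)
    ultimately show ?thesis unfolding Z_def t_def by (simp add: algebra_simps)
  qed
  then have "moreau \<mu>' g zb - (\<mu> - \<mu>') * L\<^sup>2 / 2 \<le> moreau \<mu> g zb"
    unfolding moreau_def[of \<mu>] by (intro cINF_greatest) (auto simp: algebra_simps)
  then show ?thesis by simp
qed

lemma sum_le_of_descent:
  fixes \<Psi> d :: "nat \<Rightarrow> real"
  assumes "\<And>n. n \<ge> 1 \<Longrightarrow> \<Psi> (Suc n) + d n \<le> \<Psi> n"
  shows "(\<Sum>n=1..N. d n) \<le> \<Psi> 1 - \<Psi> (Suc N)"
proof -
  have "(\<Sum>n=1..N. d n) \<le> (\<Sum>n=1..N. \<Psi> n - \<Psi> (Suc n))"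
    using assms by (intro sum_mono) (auto simp: algebra_simps)
  also have "\<dots> = \<Psi> 1 - \<Psi> (Suc N)"
    using sum_Suc_diff[of 1 N "\<lambda>n. - \<Psi> n"] by simp
  finally show ?thesis .
qed

lemma weighted_sq_sum_ge_if_eventually_ge:
  fixes r \<mu> :: "nat \<Rightarrow> real"
  assumes \<mu>: "\<And>n. n \<ge> 1 \<Longrightarrow> 0 \<le> \<mu> n" and "0 \<le> \<epsilon>" and r: "\<And>n. n > N0 \<Longrightarrow> \<epsilon> \<le> r n"
  shows "\<epsilon>\<^sup>2 * (\<Sum>n=1..N. \<mu> n) \<le> (\<Sum>n=1..N. \<mu> n * (r n)\<^sup>2) + \<epsilon>\<^sup>2 * (\<Sum>n=1..N0. \<mu> n)"
proof -
  have termwise: "\<epsilon>\<^sup>2 * \<mu> n \<le> \<mu> n * (r n)\<^sup>2 + (if n \<le> N0 then \<epsilon>\<^sup>2 * \<mu> n else 0)"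
    if "n \<ge> 1" for n
  proof (cases "n \<le> N0")
    case False
    then have "\<epsilon>\<^sup>2 \<le> (r n)\<^sup>2" using r[of n] \<open>0 \<le> \<epsilon>\<close> by (intro power_mono) auto
    then show ?thesis using \<mu>[OF that] False by (simp add: mult.commute mult_left_mono)
  qed (use \<mu>[OF that] in simp)
  have "(\<Sum>n=1..N. \<epsilon>\<^sup>2 * \<mu> n)
      \<le> (\<Sum>n=1..N. \<mu> n * (r n)\<^sup>2) + (\<Sum>n=1..N. if n \<le> N0 then \<epsilon>\<^sup>2 * \<mu> n else 0)"
    unfolding sum.distrib [symmetric] by (rule sum_mono) (simp add: termwise)
  also have "(\<Sum>n=1..N. if n \<le> N0 then \<epsilon>\<^sup>2 * \<mu> n else 0) = (\<Sum>n\<in>{1..N} \<inter> {..N0}. \<epsilon>\<^sup>2 * \<mu> n)"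
    by (subst sum.inter_restrict) auto
  also have "\<dots> \<le> (\<Sum>n=1..N0. \<epsilon>\<^sup>2 * \<mu> n)"
    using \<mu> \<open>0 \<le> \<epsilon>\<close> by (intro sum_mono2) auto
  finally show ?thesis by (simp add: sum_distrib_left)
qed

lemma liminf_eq_0_if_weighted_sq_sum_bounded:
  fixes r \<mu> :: "nat \<Rightarrow> real"
  assumes r: "\<And>n. 0 \<le> r n" and \<mu>: "\<And>n. n \<ge> 1 \<Longrightarrow> 0 \<le> \<mu> n"
    and diverges: "filterlim (\<lambda>N. \<Sum>n=1..N. \<mu> n) at_top at_top"
    and bounded: "\<And>N. (\<Sum>n=1..N. \<mu> n * (r n)\<^sup>2) \<le> B"
  shows "liminf (\<lambda>n. ereal (r n)) = 0"
proof (rule antisym)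
  show "0 \<le> liminf (\<lambda>n. ereal (r n))"
    by (rule Liminf_bounded) (simp add: r)
  show "liminf (\<lambda>n. ereal (r n)) \<le> 0"
  proof (rule ccontr)
    assume "\<not> ?thesis"
    then obtain z where "0 < z" "z < liminf (\<lambda>n. ereal (r n))"
      using dense[of 0] by (meson not_le)
    then obtain \<epsilon> where "0 < \<epsilon>" "ereal \<epsilon> < liminf (\<lambda>n. ereal (r n))"
      by (cases z) auto
    then have "eventually (\<lambda>n. \<epsilon> < r n) sequentially"
      by (auto dest: less_LiminfD)
    then obtain N0 where N0: "\<And>n. n > N0 \<Longrightarrow> \<epsilon> \<le> r n"
      unfolding eventually_sequentially by (meson less_imp_le)
    have "\<epsilon>\<^sup>2 * (\<Sum>n=1..N. \<mu> n) \<le> (\<Sum>n=1..N. \<mu> n * (r n)\<^sup>2) + \<epsilon>\<^sup>2 * (\<Sum>n=1..N0. \<mu> n)" for N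
      by (rule weighted_sq_sum_ge_if_eventually_ge) (use \<mu> N0 \<open>0 < \<epsilon>\<close> in auto)
    then have "\<epsilon>\<^sup>2 * (\<Sum>n=1..N. \<mu> n) \<le> B + \<epsilon>\<^sup>2 * (\<Sum>n=1..N0. \<mu> n)" for N
      using bounded[of N] by (meson add_right_mono order.trans)
    then have "(\<Sum>n=1..N. \<mu> n) \<le> (B + \<epsilon>\<^sup>2 * (\<Sum>n=1..N0. \<mu> n)) / \<epsilon>\<^sup>2" for N
      using \<open>0 < \<epsilon>\<close> by (simp add: pos_le_divide_eq mult.commute)
    moreover obtain N where "(B + \<epsilon>\<^sup>2 * (\<Sum>n=1..N0. \<mu> n)) / \<epsilon>\<^sup>2 < (\<Sum>n=1..N. \<mu> n)"
      using diverges unfolding filterlim_at_top_dense eventually_sequentially by blast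
    ultimately show False by (meson not_le)
  qed
qed

lemma step_size_lower_bound:
  fixes \<beta> \<eta> w1 w2 \<mu> :: real
  assumes "0 \<le> w1" "0 < w2" "0 < \<beta>" "0 < \<mu>" "\<mu> \<le> 1 / (2 * \<eta>)"
  shows "\<beta> / (w1 / (2 * \<eta>) + w2) * \<mu> \<le> \<beta> / (w1 + w2 / \<mu>)"
proof -
  have "w1 * \<mu> + w2 \<le> w1 / (2 * \<eta>) + w2"
    using mult_left_mono[OF assms(5,1)] by simp
  moreover have "0 < w1 * \<mu> + w2" using assms(1,2,4) by (simp add: add_nonneg_pos)
  ultimately have "\<beta> * \<mu> / (w1 / (2 * \<eta>) + w2) \<le> \<beta> * \<mu> / (w1 * \<mu> + w2)"
    using assms(3,4) by (intro divide_left_mono) auto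
  also have "\<dots> = \<beta> / (w1 + w2 / \<mu>)"
    using assms(4) by (simp add: field_simps)
  finally show ?thesis by simp
qed

locale smoothed_prox_grad =
  fixes \<phi> :: "'a::{real_inner, heine_borel} \<Rightarrow> ereal"
    and h :: "'a \<Rightarrow> real"
    and S :: "'a \<Rightarrow> 'b::real_normed_vector"
    and g :: "'b \<Rightarrow> real"
    and F :: "nat \<Rightarrow> 'a \<Rightarrow> real"
    and L c \<kappa> \<gamma>bar :: real
    and \<mu> \<gamma> :: "nat \<Rightarrow> real"
    and x :: "nat \<Rightarrow> 'a"
  assumes F_eq: "\<And>n y. F n y = h y + moreau (\<mu> n) g (S y)"
    and \<phi>: "proper_fun \<phi>" "lsc_fun \<phi>" "convex_fun \<phi>"
    and g_lip: "L-lipschitz_on UNIV g"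
    and argmin_ne: "\<exists>xs. \<forall>y. ereal (h xs + g (S xs)) + \<phi> xs \<le> ereal (h y + g (S y)) + \<phi> y"
    and x1: "x 1 \<in> edom \<phi>"
    and c_pos: "0 < c"
    and \<kappa>_pos: "0 < \<kappa>"
    and \<mu>_pos: "\<And>n. n \<ge> 1 \<Longrightarrow> 0 < \<mu> n"
    and \<mu>_antimono: "\<And>n. n \<ge> 1 \<Longrightarrow> \<mu> (Suc n) \<le> \<mu> n"
    and \<mu>_sum: "filterlim (\<lambda>N. \<Sum>n=1..N. \<mu> n) at_top at_top"
    and \<gamma>_bounds: "\<And>n. n \<ge> 1 \<Longrightarrow> \<kappa> * \<mu> n \<le> \<gamma> n \<and> \<gamma> n \<le> \<gamma>bar"
    and descent: "\<And>n. n \<ge> 1 \<Longrightarrow>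
      ereal (F n (x (Suc n))) + \<phi> (x (Suc n))
        \<le> ereal (F n (x n)) + \<phi> (x n) - ereal (c * \<gamma> n * (resid (\<gamma> n) (F n) \<phi> (x n))\<^sup>2)"
begin

lemma iterate_in_edom: "n \<ge> 1 \<Longrightarrow> x n \<in> edom \<phi>"
proof (induction n rule: dec_induct)
  case base
  show ?case by (rule x1)
next
  case (step n)
  then have "ereal (F n (x n)) + \<phi> (x n) - ereal (c * \<gamma> n * (resid (\<gamma> n) (F n) \<phi> (x n))\<^sup>2) < \<infinity>"
    by (cases "\<phi> (x n)") (auto simp: edom_def)
  then have "ereal (F n (x (Suc n))) + \<phi> (x (Suc n)) < \<infinity>"
    using descent[OF step.hyps(1)] by (rule le_less_trans[rotated])
  then show ?case by (auto simp: edom_def)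
qed

text \<open>The term \<open>\<mu> n * L\<^sup>2 / 2\<close> absorbs the change of the smoothing \<open>F n\<close> from one step to
  the next.\<close>
definition lyapunov :: "nat \<Rightarrow> real" where
  "lyapunov n = F n (x n) + real_of_ereal (\<phi> (x n)) + \<mu> n * L\<^sup>2 / 2"

lemma lyapunov_decrease:
  assumes "n \<ge> 1"
  shows "lyapunov (Suc n) + c * \<gamma> n * (resid (\<gamma> n) (F n) \<phi> (x n))\<^sup>2 \<le> lyapunov n"
proof -
  obtain a b where a: "\<phi> (x n) = ereal a" and b: "\<phi> (x (Suc n)) = ereal b"
    using iterate_in_edom[OF assms] iterate_in_edom[of "Suc n"] assms
    by (meson \<phi>(1) proper_fun_edomE le_SucI)
  have "F n (x (Suc n)) + b \<le> F n (x n) + a - c * \<gamma> n * (resid (\<gamma> n) (F n) \<phi> (x n))\<^sup>2"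
    using descent[OF assms] a b by simp
  moreover have "F (Suc n) (x (Suc n)) + \<mu> (Suc n) * L\<^sup>2 / 2 \<le> F n (x (Suc n)) + \<mu> n * L\<^sup>2 / 2"
    using moreau_le_moreau_plus[OF \<mu>_pos \<mu>_antimono[OF assms] g_lip, of "S (x (Suc n))"] assms
    unfolding F_eq by (simp add: left_diff_distrib diff_divide_distrib)
  ultimately show ?thesis
    unfolding lyapunov_def a b real_of_ereal.simps by linarith
qed

lemma lyapunov_bounded_below:
  obtains m where "\<And>n. n \<ge> 1 \<Longrightarrow> m \<le> lyapunov n"
proof -
  obtain xs where xs: "\<And>y. ereal (h xs + g (S xs)) + \<phi> xs \<le> ereal (h y + g (S y)) + \<phi> y"
    using argmin_ne by blast
  obtain a1 where "\<phi> (x 1) = ereal a1" using x1 \<phi>(1) by (blast elim: proper_fun_edomE)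
  then have "\<phi> xs < \<infinity>" using xs[of "x 1"] by (cases "\<phi> xs") auto
  then obtain a where a: "\<phi> xs = ereal a"
    using \<phi>(1) by (blast elim: proper_fun_edomE[unfolded edom_def])
  have "h xs + g (S xs) + a \<le> lyapunov n" if n: "n \<ge> 1" for n
  proof -
    obtain b where b: "\<phi> (x n) = ereal b"
      using iterate_in_edom[OF n] \<phi>(1) by (blast elim: proper_fun_edomE)
    have "h xs + g (S xs) + a \<le> h (x n) + g (S (x n)) + b"
      using xs[of "x n"] a b by simp
    moreover have "g (S (x n)) - \<mu> n * L\<^sup>2 / 2 \<le> moreau (\<mu> n) g (S (x n))"
      by (rule moreau_ge[OF \<mu>_pos[OF n] g_lip])
    ultimately show ?thesis by (simp add: lyapunov_def F_eq b)
  qed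
  then show thesis by (rule that)
qed

lemma weighted_resid_sq_sum_bounded:
  obtains B where "\<And>N. (\<Sum>n=1..N. \<mu> n * (resid \<gamma>bar (F n) \<phi> (x n))\<^sup>2) \<le> B"
proof -
  obtain m where m: "\<And>n. n \<ge> 1 \<Longrightarrow> m \<le> lyapunov n"
    using lyapunov_bounded_below by blast
  have per_step: "c * \<kappa> * (\<mu> n * (resid \<gamma>bar (F n) \<phi> (x n))\<^sup>2)
      \<le> c * \<gamma> n * (resid (\<gamma> n) (F n) \<phi> (x n))\<^sup>2"
    if "n \<ge> 1" for n
  proof -
    have "0 < \<gamma> n"
      using \<gamma>_bounds[OF that] \<mu>_pos[OF that] \<kappa>_pos by (meson mult_pos_pos order.strict_trans2)
    then have "resid \<gamma>bar (F n) \<phi> (x n) \<le> resid (\<gamma> n) (F n) \<phi> (x n)"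
      using \<gamma>_bounds[OF that] by (intro resid_antimono[OF \<phi>]) auto
    then have "(resid \<gamma>bar (F n) \<phi> (x n))\<^sup>2 \<le> (resid (\<gamma> n) (F n) \<phi> (x n))\<^sup>2"
      by (intro power_mono) (simp_all add: resid_def)
    then have "\<kappa> * \<mu> n * (resid \<gamma>bar (F n) \<phi> (x n))\<^sup>2 \<le> \<gamma> n * (resid (\<gamma> n) (F n) \<phi> (x n))\<^sup>2"
      using \<gamma>_bounds[OF that] \<open>0 < \<gamma> n\<close> by (intro mult_mono) auto
    from mult_left_mono[OF this, of c] show ?thesis
      using c_pos by (simp add: mult.assoc)
  qed
  have "c * \<kappa> * (\<Sum>n=1..N. \<mu> n * (resid \<gamma>bar (F n) \<phi> (x n))\<^sup>2) \<le> lyapunov 1 - m" for N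
  proof -
    have "c * \<kappa> * (\<Sum>n=1..N. \<mu> n * (resid \<gamma>bar (F n) \<phi> (x n))\<^sup>2)
        \<le> (\<Sum>n=1..N. c * \<gamma> n * (resid (\<gamma> n) (F n) \<phi> (x n))\<^sup>2)"
      unfolding sum_distrib_left by (rule sum_mono) (simp add: per_step)
    also have "\<dots> \<le> lyapunov 1 - lyapunov (Suc N)"
      by (rule sum_le_of_descent) (rule lyapunov_decrease)
    also have "\<dots> \<le> lyapunov 1 - m"
      using m[of "Suc N"] by simp
    finally show ?thesis .
  qed
  then show thesis
    using c_pos \<kappa>_pos
    by (intro that[of "(lyapunov 1 - m) / (c * \<kappa>)"]) (simp add: pos_le_divide_eq mult.commute)
qed

lemma liminf_resid_eq_0: "liminf (\<lambda>n. ereal (resid \<gamma>bar (F n) \<phi> (x n))) = 0"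
proof -
  obtain B where "\<And>N. (\<Sum>n=1..N. \<mu> n * (resid \<gamma>bar (F n) \<phi> (x n))\<^sup>2) \<le> B"
    using weighted_resid_sq_sum_bounded by blast
  then show ?thesis
    using \<mu>_pos \<mu>_sum
    by (intro liminf_eq_0_if_weighted_sq_sum_bounded) (auto simp: resid_def less_imp_le)
qed

end

theorem theorem2:
  fixes \<phi> :: "'a::euclidean_space \<Rightarrow> ereal"
    and h :: "'a \<Rightarrow> real"
    and S :: "'a \<Rightarrow> 'b::euclidean_space"
    and g :: "'b \<Rightarrow> real"
    and Lg \<eta> Lh c M \<beta> \<gamma>bar w1 w2 :: real
    and \<mu> \<gamma> :: "nat \<Rightarrow> real"
    and x :: "nat \<Rightarrow> 'a"
  defines "F \<equiv> (\<lambda>n y. h y + moreau (\<mu> n) g (S y))"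
  assumes phi: "proper_fun \<phi>" "lsc_fun \<phi>" "convex_fun \<phi>"
    and h_diff: "\<forall>y. h differentiable (at y)"
    and h_lip: "Lh-lipschitz_on (edom \<phi>) (grad h)"
    and S_C1: "\<exists>DS :: 'a \<Rightarrow> ('a \<Rightarrow>\<^sub>L 'b).
                  (\<forall>y. (S has_derivative blinfun_apply (DS y)) (at y)) \<and> continuous_on UNIV DS"
    and g_lip: "Lg > 0" "Lg-lipschitz_on UNIV g"
    and g_wc: "\<eta> > 0" "convex_on UNIV (\<lambda>z. g z + \<eta> / 2 * (norm z)\<^sup>2)"
    and argmin_ne: "\<exists>xs. \<forall>y. ereal (h xs + g (S xs)) + \<phi> xs \<le> ereal (h y + g (S y)) + \<phi> y"
    and x1: "x 1 \<in> edom \<phi>"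
    and c: "0 < c" "c < 1"
    and mu_pos: "\<forall>n\<ge>1. 0 < \<mu> n \<and> \<mu> n \<le> 1 / (2 * \<eta>)"
    and mu_lim: "\<mu> \<longlonglongrightarrow> 0"
    and mu_sum: "filterlim (\<lambda>N. \<Sum>n=1..N. \<mu> n) at_top at_top"
    and M: "M \<ge> 1" "\<forall>n\<ge>1. 1 / M \<le> \<mu> (n + 1) / \<mu> n \<and> \<mu> (n + 1) / \<mu> n \<le> 1"
    and F_diff: "\<forall>n\<ge>1. \<forall>y. F n differentiable (at y)"
    and F_lip: "w1 \<ge> 0" "w2 > 0"
               "\<forall>n\<ge>1. (w1 + w2 / \<mu> n)-lipschitz_on (edom \<phi>) (grad (F n))"
    and \<beta>: "\<beta> > 0" and \<gamma>bar: "\<gamma>bar > 0"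
    and gamma_bounds: "\<forall>n\<ge>1. \<beta> / (w1 + w2 / \<mu> n) \<le> \<gamma> n \<and> \<gamma> n \<le> \<gamma>bar"
    and descent: "\<forall>n\<ge>1.
         ereal (F n (prox (\<gamma> n) \<phi> (x n - \<gamma> n *\<^sub>R grad (F n) (x n))))
           + \<phi> (prox (\<gamma> n) \<phi> (x n - \<gamma> n *\<^sub>R grad (F n) (x n)))
         \<le> ereal (F n (x n)) + \<phi> (x n) - ereal (c * \<gamma> n * (resid (\<gamma> n) (F n) \<phi> (x n))\<^sup>2)"
    and iter: "\<forall>n\<ge>1. x (n + 1) = prox (\<gamma> n) \<phi> (x n - \<gamma> n *\<^sub>R grad (F n) (x n))"
  shows "liminf (\<lambda>n. ereal (resid \<gamma>bar (F n) \<phi> (x n))) = 0"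
proof -
  \<comment> \<open>Not needed for this conclusion: the differentiability and Lipschitz-gradient hypotheses,
    the weak convexity of \<open>g\<close>, \<open>c < 1\<close>, \<open>\<mu> \<longlonglongrightarrow> 0\<close> and the lower bound \<open>1 / M\<close> on \<open>\<mu> (n + 1) / \<mu> n\<close>.\<close>
  have F_eq: "\<And>n y. F n y = h y + moreau (\<mu> n) g (S y)"
    by (simp add: F_def)
  have \<mu>_pos: "\<And>n. n \<ge> 1 \<Longrightarrow> 0 < \<mu> n"
    using mu_pos by blast
  have \<mu>_antimono: "\<mu> (Suc n) \<le> \<mu> n" if "n \<ge> 1" for n
    using M(2) \<mu>_pos[OF that] that by (auto simp: divide_le_eq)
  define \<kappa> where "\<kappa> = \<beta> / (w1 / (2 * \<eta>) + w2)"
  have \<kappa>_pos: "0 < \<kappa>"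
    using F_lip(1,2) g_wc(1) \<beta> by (simp add: \<kappa>_def add_nonneg_pos)
  have \<gamma>_bounds: "\<kappa> * \<mu> n \<le> \<gamma> n \<and> \<gamma> n \<le> \<gamma>bar" if "n \<ge> 1" for n
    using step_size_lower_bound[OF F_lip(1,2) \<beta>, of "\<mu> n" \<eta>] mu_pos gamma_bounds that
    by (auto simp: \<kappa>_def mult.commute)
  have descent': "ereal (F n (x (Suc n))) + \<phi> (x (Suc n))
      \<le> ereal (F n (x n)) + \<phi> (x n) - ereal (c * \<gamma> n * (resid (\<gamma> n) (F n) \<phi> (x n))\<^sup>2)"
    if "n \<ge> 1" for n
    using descent iter that by simp
  interpret smoothed_prox_grad \<phi> h S g F Lg c \<kappa> \<gamma>bar \<mu> \<gamma> x
    by unfold_locales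
      (fact F_eq phi g_lip(2) argmin_ne x1 c(1) \<kappa>_pos \<mu>_pos \<mu>_antimono mu_sum \<gamma>_bounds descent')+
  show ?thesis
    by (rule liminf_resid_eq_0)
qed

end
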